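(* Let $d\ge2$, let $\mathcal{S}$ be a simple-minded system of $A_n^{dn}$-$\underline{\mathrm{mod}}$ with associated permutation $\sigma$. For $a\in\underline{n}$ with $\sigma$-orbit of size $s_a$ and $0\le j\le s_a-1$, write the object of $\mathcal{S}$ with top $S_{\sigma^j(a)}$ as $M^{\sigma^j(a)}_{\sigma^{j+1}(a),l_{aj}}$. Suppose there exists $i$ with $l_{ij}=d-1$ for all $0\le j\le s_i-1$. Then for every $s$ whose $\sigma$-orbit differs from that of $i$, there is exactly one $t\in\{0,\dots,s_s-1\}$ with $l_{st}=0$.
   Context: $A_n^{dn}=kQ/I$ ($k$ algebraically closed), $Q$ the cyclic quiver with vertices $1,\dots,n$ and arrows $i\to i+1$, $n\to1$, $I$ generated by all paths of length $dn+1$. $M^a_{b,t}$ is the indecomposable (uniserial) module with top $S_a$, socle $S_b$, and $S_a$ occurring $t+1$ times as composition factor. $\underline{\mathrm{Hom}}$ is Hom modulo maps factoring through projectives. A simple-minded system (sms) is a family $\mathcal{S}$ of indecomposable non-projective modules with $\underline{\mathrm{Hom}}(S,T)=0$ for distinct $S,T\in\mathcal{S}$, $\underline{\mathrm{Hom}}(S,S)\cong k$, and such that each indecomposable non-projective $X$ has $\underline{\mathrm{Hom}}(X,S)\neq0$ for some $S\in\mathcal{S}$. For an sms each simple is the top of exactly one and the socle of exactly one object; the associated permutation $\sigma$ of $\underline{n}=\{1,\dots,n\}$ is $\sigma(a)=b$ if some object has top $S_a$ and socle $S_b$. *)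

theory Defs
  imports Main
begin

text \<open>Combinatorial model of the indecomposable modules of the self-injective
Nakayama algebra A_n^{dn} = kQ/I (cyclic quiver 1 -> 2 -> ... -> n -> 1, all
paths of length dn+1 zero).  Every indecomposable module is uniserial and is
determined by its top S_a (a in {1..n}) and its length l, 1 <= l <= dn+1;
its composition factors from top to socle are S_a, S_(a+1), ..., S_(a+l-1)
(indices modulo n).  We represent it by the pair (a, l).\<close>

type_synonym nmod = "nat \<times> nat"

definition loewy :: "nat \<Rightarrow> nat \<Rightarrow> nat" where
  "loewy n d = d * n + 1"

definition is_ind :: "nat \<Rightarrow> nat \<Rightarrow> nmod \<Rightarrow> bool" where
  "is_ind n d X \<longleftrightarrow> fst X \<in> {1..n} \<and> 1 \<le> snd X \<and> snd X \<le> loewy n d"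

text \<open>indecomposable non-projective module (the projectives are those of length dn+1)\<close>
definition is_ind_nonproj :: "nat \<Rightarrow> nat \<Rightarrow> nmod \<Rightarrow> bool" where
  "is_ind_nonproj n d X \<longleftrightarrow> fst X \<in> {1..n} \<and> 1 \<le> snd X \<and> snd X \<le> d * n"

definition top_of :: "nmod \<Rightarrow> nat" where
  "top_of X = fst X"

text \<open>index of the socle: S_(a+l-1), labels taken in {1..n}\<close>
definition soc_of :: "nat \<Rightarrow> nmod \<Rightarrow> nat" where
  "soc_of n X = ((fst X + snd X - 2) mod n) + 1"

text \<open>the number t such that the top occurs t+1 times as composition factor\<close>
definition tmult :: "nat \<Rightarrow> nmod \<Rightarrow> nat" where
  "tmult n X = (snd X - 1) div n"

text \<open>M^a_{b,t}: top S_a, socle S_b, S_a occurring t+1 times.\<close>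
definition Mab :: "nat \<Rightarrow> nat \<Rightarrow> nat \<Rightarrow> nat \<Rightarrow> nmod" where
  "Mab n a b t = (a, t * n + nat ((int b - int a) mod int n) + 1)"

text \<open>Dimension of the stable Hom space \<underline>Hom((a,l),(b,m)).  A basis of
Hom((a,l),(b,m)) is given by the maps with image the uniserial module of top
S_a and length k, where 1 <= k <= min l m and a + k = b + m (mod n); such a
map factors through a projective iff k + (dn+1) <= l + m.\<close>
definition shom_dim :: "nat \<Rightarrow> nat \<Rightarrow> nmod \<Rightarrow> nmod \<Rightarrow> nat" where
  "shom_dim n d X Y = card {k. 1 \<le> k \<and> k \<le> min (snd X) (snd Y)
       \<and> snd X + snd Y < k + loewy n d
       \<and> (fst X + k) mod n = (fst Y + snd Y) mod n}"

definition is_sms :: "nat \<Rightarrow> nat \<Rightarrow> nmod set \<Rightarrow> bool" where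
  "is_sms n d S \<longleftrightarrow>
     (\<forall>X\<in>S. is_ind_nonproj n d X) \<and>
     (\<forall>X\<in>S. \<forall>Y\<in>S. X \<noteq> Y \<longrightarrow> shom_dim n d X Y = 0) \<and>
     (\<forall>X\<in>S. shom_dim n d X X = 1) \<and>
     (\<forall>X. is_ind_nonproj n d X \<longrightarrow> (\<exists>Y\<in>S. shom_dim n d X Y \<noteq> 0))"

definition obj_top :: "nmod set \<Rightarrow> nat \<Rightarrow> nmod" where
  "obj_top S a = (THE X. X \<in> S \<and> top_of X = a)"

definition sms_perm :: "nat \<Rightarrow> nmod set \<Rightarrow> nat \<Rightarrow> nat" where
  "sms_perm n S a = soc_of n (obj_top S a)"

definition orbit_size :: "nat \<Rightarrow> nmod set \<Rightarrow> nat \<Rightarrow> nat" where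
  "orbit_size n S a = (LEAST p. 0 < p \<and> (sms_perm n S ^^ p) a = a)"

definition sorbit :: "nat \<Rightarrow> nmod set \<Rightarrow> nat \<Rightarrow> nat set" where
  "sorbit n S a = {(sms_perm n S ^^ k) a | k. True}"

text \<open>l_{aj}: the object of S with top S_(sigma^j a) is M^(sigma^j a)_(sigma^(j+1) a, l_{aj})\<close>
definition lval :: "nat \<Rightarrow> nmod set \<Rightarrow> nat \<Rightarrow> nat \<Rightarrow> nat" where
  "lval n S a j = tmult n (obj_top S ((sms_perm n S ^^ j) a))"

end

theory Submission
  imports Defs
begin

text \<open>Identify each object of S with its top.  Every object is either short (length at
  most n, so l = 0) or long (length above (d - 1) n, so l = d - 1).  For a long object A,
  call the vertices strictly between \<sigma> A and A, counted downwards from A modulo n, the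
  window of A.  As \<sigma> moves a to a + len a - 1, the long objects along the orbit of i step
  downwards and their windows cover every vertex outside that orbit.  Orthogonality of S
  makes every window \<sigma>-invariant: on a window, short objects decrease the offset from A
  and long ones increase it, while the orbit of a short object x never leaves the offsets
  between \<sigma> x and x.  So on the orbit of a vertex s in a window, the short objects are
  exactly the points of largest offset from A, and there is exactly one of them.\<close>

lemma bounded_eq_if_dvd_diff:
  fixes a b n :: int
  assumes "n dvd a - b" "0 \<le> a" "a < n" "0 \<le> b" "b < n"
  shows "a = b"
  using assms by (metis mod_eq_dvd_iff mod_pos_pos_trivial)

lemma label_eq_if_dvd_diff:
  assumes "int n dvd int a - int b" "a \<in> {1..n}" "b \<in> {1..n}"
  shows "a = b"
proof -
  have "int n dvd (int a - 1) - (int b - 1)"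
    using assms(1) by simp
  then have "int a - 1 = int b - 1"
    by (rule bounded_eq_if_dvd_diff) (use assms(2,3) in auto)
  then show ?thesis
    by simp
qed

lemma mod_eq_iff_int_dvd_diff: "(x::nat) mod n = y mod n \<longleftrightarrow> int n dvd int x - int y"
proof -
  have "x mod n = y mod n \<longleftrightarrow> int x mod int n = int y mod int n"
    by (simp flip: of_nat_mod)
  also have "\<dots> \<longleftrightarrow> int n dvd int x - int y"
    by (rule mod_eq_dvd_iff)
  finally show ?thesis .
qed

lemma soc_of_dvd:
  assumes "1 \<le> fst X" "1 \<le> snd X"
  shows "int n dvd int (fst X) + int (snd X) - 1 - int (soc_of n X)"
proof -
  define x where "x = int (fst X) + int (snd X) - 2"
  have "int (soc_of n X) = x mod int n + 1"
    using assms by (simp add: soc_of_def x_def of_nat_mod)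
  then have "int (fst X) + int (snd X) - 1 - int (soc_of n X) = x - x mod int n"
    by (simp add: x_def)
  then show ?thesis
    by simp
qed

lemma soc_of_in_labels: "0 < n \<Longrightarrow> soc_of n X \<in> {1..n}"
  by (simp add: soc_of_def Suc_leI)

lemma shom_dim_neq_0I:
  fixes k :: int
  assumes "1 \<le> k" "k \<le> int (snd X)" "k \<le> int (snd Y)"
    and "int (snd X) + int (snd Y) < k + int d * int n + 1"
    and "int n dvd int (fst X) + k - int (fst Y) - int (snd Y)"
  shows "shom_dim n d X Y \<noteq> 0"
proof -
  let ?K = "{k. 1 \<le> k \<and> k \<le> min (snd X) (snd Y) \<and> snd X + snd Y < k + loewy n d
             \<and> (fst X + k) mod n = (fst Y + snd Y) mod n}"
  have "(fst X + nat k) mod n = (fst Y + snd Y) mod n"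
    using assms(1,5) by (simp add: mod_eq_iff_int_dvd_diff algebra_simps)
  moreover have "int (snd X + snd Y) < int (nat k + loewy n d)"
    using assms(1,4) by (simp add: loewy_def)
  moreover have "1 \<le> nat k" "nat k \<le> min (snd X) (snd Y)"
    using assms(1-3) by auto
  ultimately have "nat k \<in> ?K"
    by (simp only: of_nat_less_iff mem_Collect_eq)
  moreover have "finite ?K"
    by (rule finite_subset[of _ "{..snd X}"]) auto
  ultimately show ?thesis
    unfolding shom_dim_def by auto
qed

lemma shom_dim_onto_quotient_neq_0:
  assumes "fst X = fst Y" "1 \<le> snd Y" "snd Y \<le> snd X" "snd X \<le> d * n"
  shows "shom_dim n d X Y \<noteq> 0"
  by (rule shom_dim_neq_0I[where k = "int (snd Y)"])
    (use assms in \<open>simp_all add: of_nat_mult[symmetric] del: of_nat_mult\<close>)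

lemma shom_dim_from_submodule_neq_0:
  assumes "int n dvd int (fst X) + int (snd X) - int (fst Y) - int (snd Y)"
    and "1 \<le> snd X" "snd X \<le> snd Y" "snd Y \<le> d * n"
  shows "shom_dim n d X Y \<noteq> 0"
  by (rule shom_dim_neq_0I[where k = "int (snd X)"])
    (use assms in \<open>simp_all add: of_nat_mult[symmetric] del: of_nat_mult\<close>)

lemma funpow_in_invariant: "f ` A \<subseteq> A \<Longrightarrow> a \<in> A \<Longrightarrow> (f ^^ k) a \<in> A"
  by (induction k) auto

lemma funpow_period_exists:
  assumes "finite A" "f ` A \<subseteq> A" "inj_on f A" "a \<in> A"
  obtains p where "0 < p" "(f ^^ p) a = a"
proof -
  have "\<not> inj_on (\<lambda>k. (f ^^ k) a) {..card A}"
  proof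
    assume inj: "inj_on (\<lambda>k. (f ^^ k) a) {..card A}"
    have "(\<lambda>k. (f ^^ k) a) ` {..card A} \<subseteq> A"
      using funpow_in_invariant[OF assms(2,4)] by blast
    then have "card {..card A} \<le> card A"
      using card_inj_on_le[OF inj _ assms(1)] by blast
    then show False
      by simp
  qed
  then obtain i j where "i \<noteq> j" "(f ^^ i) a = (f ^^ j) a"
    unfolding inj_on_def by blast
  then obtain i j where ij: "i < j" "(f ^^ i) a = (f ^^ j) a"
    by (metis linorder_neqE_nat)
  have "bij_betw f A A"
    using assms(1-3) by (simp add: bij_betw_def endo_inj_surj)
  then have inj: "inj_on (f ^^ i) A"
    by (rule bij_betw_imp_inj_on[OF bij_betw_funpow])
  have "(f ^^ i) ((f ^^ (j - i)) a) = (f ^^ i) a"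
    using ij by (simp flip: funpow_add comp_apply[of "f ^^ i"])
  then have "(f ^^ (j - i)) a = a"
    using inj_onD[OF inj _ funpow_in_invariant[OF assms(2,4)] assms(4)] by blast
  then show ?thesis
    using that[of "j - i"] ij(1) by simp
qed

locale simple_minded_system =
  fixes n d :: nat and S :: "nmod set"
  assumes n_pos: "0 < n" and d_ge_2: "2 \<le> d" and sms: "is_sms n d S"
begin

lemma
  shows mem_S_nonproj: "X \<in> S \<Longrightarrow> is_ind_nonproj n d X"
    and shom_dim_S_distinct: "X \<in> S \<Longrightarrow> Y \<in> S \<Longrightarrow> X \<noteq> Y \<Longrightarrow> shom_dim n d X Y = 0"
    and shom_dim_S_self: "X \<in> S \<Longrightarrow> shom_dim n d X X = 1"
    and detects_nonproj: "is_ind_nonproj n d X \<Longrightarrow> \<exists>Y\<in>S. shom_dim n d X Y \<noteq> 0"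
  using sms unfolding is_sms_def by blast+

lemma mem_S_bounds: "X \<in> S \<Longrightarrow> fst X \<in> {1..n} \<and> 1 \<le> snd X \<and> snd X \<le> d * n"
  using mem_S_nonproj by (simp add: is_ind_nonproj_def)

lemma eq_if_shom_dim_neq_0: "X \<in> S \<Longrightarrow> Y \<in> S \<Longrightarrow> shom_dim n d X Y \<noteq> 0 \<Longrightarrow> X = Y"
  using shom_dim_S_distinct by meson

lemma mem_S_soc_of_dvd: "X \<in> S \<Longrightarrow> int n dvd int (fst X) + int (snd X) - 1 - int (soc_of n X)"
  using mem_S_bounds by (simp add: soc_of_dvd)

lemma inj_on_fst: "inj_on fst S"
proof (rule inj_onI)
  have quotient: "X = Y" if "X \<in> S" "Y \<in> S" "fst X = fst Y" "snd Y \<le> snd X" for X Y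
    using that mem_S_bounds[OF that(1)] mem_S_bounds[OF that(2)]
    by (intro eq_if_shom_dim_neq_0 shom_dim_onto_quotient_neq_0) auto
  fix X Y assume "X \<in> S" "Y \<in> S" "fst X = fst Y"
  then show "X = Y"
    using quotient[of X Y] quotient[of Y X] by fastforce
qed

lemma inj_on_soc_of: "inj_on (soc_of n) S"
proof (rule inj_onI)
  have submodule: "X = Y"
    if "X \<in> S" "Y \<in> S" "soc_of n X = soc_of n Y" "snd X \<le> snd Y" for X Y
  proof -
    have "int n dvd (int (fst X) + int (snd X) - 1 - int (soc_of n X))
                    - (int (fst Y) + int (snd Y) - 1 - int (soc_of n Y))"
      using that(1,2) by (intro dvd_diff mem_S_soc_of_dvd)
    then have "int n dvd int (fst X) + int (snd X) - int (fst Y) - int (snd Y)"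
      using that(3) by (simp add: algebra_simps)
    then show "X = Y"
      using that mem_S_bounds[OF that(1)] mem_S_bounds[OF that(2)]
      by (intro eq_if_shom_dim_neq_0 shom_dim_from_submodule_neq_0) auto
  qed
  fix X Y assume "X \<in> S" "Y \<in> S" "soc_of n X = soc_of n Y"
  then show "X = Y"
    using submodule[of X Y] submodule[of Y X] by fastforce
qed

lemma soc_of_image: "soc_of n ` S = {1..n}"
proof
  show "soc_of n ` S \<subseteq> {1..n}"
    using soc_of_in_labels[OF n_pos] by blast
  show "{1..n} \<subseteq> soc_of n ` S"
  proof
    fix a assume a: "a \<in> {1..n}"
    have "is_ind_nonproj n d (a, 1)"
      using a n_pos d_ge_2 by (simp add: is_ind_nonproj_def Suc_leI)
    then obtain Y where Y: "Y \<in> S" "shom_dim n d (a, 1) Y \<noteq> 0"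
      by (rule detects_nonproj[THEN bexE]) blast
    then have "{k. 1 \<le> k \<and> k \<le> min 1 (snd Y) \<and> 1 + snd Y < k + loewy n d
                 \<and> (a + k) mod n = (fst Y + snd Y) mod n} \<noteq> {}"
      unfolding shom_dim_def by (intro notI) simp
    then have "(a + 1) mod n = (fst Y + snd Y) mod n"
      by (auto simp: le_antisym)
    then have "int n dvd int a + 1 - int (fst Y) - int (snd Y)"
      by (simp add: mod_eq_iff_int_dvd_diff algebra_simps)
    moreover have "int n dvd int (fst Y) + int (snd Y) - 1 - int (soc_of n Y)"
      using Y(1) by (rule mem_S_soc_of_dvd)
    ultimately have "int n dvd (int a + 1 - int (fst Y) - int (snd Y))
                      + (int (fst Y) + int (snd Y) - 1 - int (soc_of n Y))"
      by (rule dvd_add)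
    then have "int n dvd int a - int (soc_of n Y)"
      by simp
    then have "a = soc_of n Y"
      using a soc_of_in_labels[OF n_pos] by (rule label_eq_if_dvd_diff)
    then show "a \<in> soc_of n ` S"
      using Y(1) by blast
  qed
qed

lemma fst_image: "fst ` S = {1..n}"
proof (rule card_subset_eq)
  show "fst ` S \<subseteq> {1..n}"
    using mem_S_bounds by blast
  have "card (fst ` S) = card (soc_of n ` S)"
    using inj_on_fst inj_on_soc_of by (simp add: card_image)
  then show "card (fst ` S) = card {1..n}"
    by (simp add: soc_of_image)
qed simp

lemma obj_top:
  assumes "a \<in> {1..n}"
  shows "obj_top S a \<in> S" and "fst (obj_top S a) = a"
proof -
  obtain X where X: "X \<in> S" "fst X = a"
    using assms fst_image by force
  have "obj_top S a = X"
    unfolding obj_top_def top_of_def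
    by (rule the_equality) (use X inj_on_fst in \<open>auto dest: inj_onD\<close>)
  with X show "obj_top S a \<in> S" "fst (obj_top S a) = a"
    by auto
qed

abbreviation \<sigma> :: "nat \<Rightarrow> nat" where
  "\<sigma> \<equiv> sms_perm n S"

definition len :: "nat \<Rightarrow> nat" where
  "len a = snd (obj_top S a)"

lemma sigma_in_labels: "\<sigma> a \<in> {1..n}"
  unfolding sms_perm_def by (rule soc_of_in_labels[OF n_pos])

lemma inj_on_sigma: "inj_on \<sigma> {1..n}"
proof (rule inj_onI)
  fix a b assume ab: "a \<in> {1..n}" "b \<in> {1..n}" "\<sigma> a = \<sigma> b"
  then have "obj_top S a = obj_top S b"
    by (intro inj_onD[OF inj_on_soc_of]) (simp_all add: sms_perm_def obj_top(1))
  then show "a = b"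
    using obj_top(2) ab(1,2) by metis
qed

lemma len_bounds: "a \<in> {1..n} \<Longrightarrow> 1 \<le> len a \<and> len a \<le> d * n"
  using mem_S_bounds[OF obj_top(1)] by (simp add: len_def)

lemma sigma_dvd: "a \<in> {1..n} \<Longrightarrow> int n dvd int a + int (len a) - 1 - int (\<sigma> a)"
  using mem_S_soc_of_dvd[OF obj_top(1)] by (simp add: len_def obj_top(2) sms_perm_def)

lemma no_stable_map_between_objects:
  fixes k :: int
  assumes "a \<in> {1..n}" "b \<in> {1..n}" "a \<noteq> b"
    and "1 \<le> k" "k \<le> int (len a)" "k \<le> int (len b)"
    and "int (len a) + int (len b) < k + int d * int n + 1"
    and "int n dvd int a + k - int b - int (len b)"
  shows False
proof -
  have "shom_dim n d (obj_top S a) (obj_top S b) \<noteq> 0"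
    using assms(4-8) obj_top(2)[OF assms(1)] obj_top(2)[OF assms(2)]
    by (intro shom_dim_neq_0I) (simp_all add: len_def)
  then have "obj_top S a = obj_top S b"
    using assms(1,2) by (intro eq_if_shom_dim_neq_0 obj_top)
  then show False
    using obj_top(2) assms(1-3) by metis
qed

text \<open>An object of length l between n + 1 and (d - 1) n would have two independent
  stable endomorphisms, with images of length l and l - n.\<close>
lemma short_or_long: "a \<in> {1..n} \<Longrightarrow> len a \<le> n \<or> d * n < len a + n"
proof (rule ccontr)
  assume a: "a \<in> {1..n}" and "\<not> (len a \<le> n \<or> d * n < len a + n)"
  then have long: "n < len a" and short: "len a + n \<le> d * n"
    by auto
  define X where "X = obj_top S a"
  let ?K = "{k. 1 \<le> k \<and> k \<le> min (snd X) (snd X) \<and> snd X + snd X < k + loewy n d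
             \<and> (fst X + k) mod n = (fst X + snd X) mod n}"
  have "fst X + snd X = (fst X + (len a - n)) + n"
    using long by (simp add: X_def len_def)
  then have "(fst X + (len a - n)) mod n = (fst X + snd X) mod n"
    by (simp only: mod_add_self2)
  then have "{len a - n, len a} \<subseteq> ?K"
    using long short len_bounds[OF a] by (auto simp: X_def len_def loewy_def)
  moreover have "finite ?K"
    by (rule finite_subset[of _ "{..snd X}"]) auto
  ultimately have "card {len a - n, len a} \<le> card ?K"
    by (rule card_mono[rotated])
  moreover have "card ?K = 1"
    using shom_dim_S_self[OF obj_top(1)[OF a]] by (simp add: shom_dim_def X_def)
  ultimately show False
    using long n_pos by simp
qed

lemma two_n_le_dn: "2 * int n \<le> int d * int n"
  using mult_right_mono[of 2 "int d" "int n"] d_ge_2 by simp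

lemma tmult_obj_top:
  assumes "a \<in> {1..n}"
  shows "tmult n (obj_top S a) = (if len a \<le> n then 0 else d - 1)"
proof (cases "len a \<le> n")
  case True
  moreover have "len a - 1 < n"
    using True len_bounds[OF assms] by linarith
  ultimately show ?thesis
    by (simp add: tmult_def len_def)
next
  case False
  have "(len a - 1) div n = d - 1"
  proof (rule div_nat_eqI)
    show "n * (d - 1) \<le> len a - 1" "len a - 1 < n * Suc (d - 1)"
      using False short_or_long[OF assms] len_bounds[OF assms] d_ge_2
      by (auto simp: algebra_simps diff_mult_distrib2)
  qed
  with False show ?thesis
    by (simp add: tmult_def len_def)
qed

lemma funpow_sigma_in_labels: "a \<in> {1..n} \<Longrightarrow> (\<sigma> ^^ k) a \<in> {1..n}"
  by (cases k) (use sigma_in_labels in auto)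

lemma lval_eq_0_iff: "s \<in> {1..n} \<Longrightarrow> lval n S s t = 0 \<longleftrightarrow> len ((\<sigma> ^^ t) s) \<le> n"
  using tmult_obj_top[OF funpow_sigma_in_labels] d_ge_2 by (simp add: lval_def)

lemma
  assumes "a \<in> {1..n}"
  shows orbit_size_pos: "0 < orbit_size n S a"
    and funpow_orbit_size: "(\<sigma> ^^ orbit_size n S a) a = a"
proof -
  have "\<sigma> ` {1..n} \<subseteq> {1..n}"
    by (intro image_subsetI sigma_in_labels)
  then obtain p where "0 < p" "(\<sigma> ^^ p) a = a"
    by (rule funpow_period_exists[OF finite_atLeastAtMost _ inj_on_sigma assms])
  then have "\<exists>p. 0 < p \<and> (\<sigma> ^^ p) a = a"
    by blast
  then have "0 < orbit_size n S a \<and> (\<sigma> ^^ orbit_size n S a) a = a"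
    unfolding orbit_size_def by (rule LeastI_ex)
  then show "0 < orbit_size n S a" "(\<sigma> ^^ orbit_size n S a) a = a"
    by auto
qed

lemma inj_on_orbit_index:
  assumes "a \<in> {1..n}"
  shows "inj_on (\<lambda>t. (\<sigma> ^^ t) a) {..<orbit_size n S a}"
proof -
  have "(\<sigma> ^^ m) a \<noteq> a" if "0 < m" "m < orbit_size n S a" for m
    using that not_less_Least unfolding orbit_size_def by blast
  then show ?thesis
    using inj_on_funpow_least[where f = \<sigma> and s = a and n = "orbit_size n S a"]
      funpow_orbit_size[OF assms] by (simp add: lessThan_atLeast0)
qed

lemma sorbit_eq_image:
  assumes "a \<in> {1..n}"
  shows "sorbit n S a = (\<lambda>t. (\<sigma> ^^ t) a) ` {..<orbit_size n S a}"
proof -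
  have "(\<sigma> ^^ k) a \<in> (\<lambda>t. (\<sigma> ^^ t) a) ` {..<orbit_size n S a}" for k
    using funpow_mod_eq[OF funpow_orbit_size[OF assms], of k] orbit_size_pos[OF assms]
    by (intro image_eqI[where x = "k mod orbit_size n S a"]) auto
  then show ?thesis
    unfolding sorbit_def by auto
qed

lemma sorbit_subset_labels: "a \<in> {1..n} \<Longrightarrow> sorbit n S a \<subseteq> {1..n}"
  unfolding sorbit_def using funpow_sigma_in_labels by blast

lemma self_in_sorbit: "a \<in> sorbit n S a"
  unfolding sorbit_def by (auto intro: exI[of _ 0])

lemma sigma_in_sorbit:
  assumes "b \<in> sorbit n S a"
  shows "\<sigma> b \<in> sorbit n S a"
proof -
  obtain k where "b = (\<sigma> ^^ k) a"
    using assms unfolding sorbit_def by blast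
  then have "\<sigma> b = (\<sigma> ^^ Suc k) a"
    by simp
  then show ?thesis
    unfolding sorbit_def by blast
qed

lemma sorbit_eq_if_mem:
  assumes "a \<in> {1..n}" "b \<in> sorbit n S a"
  shows "sorbit n S b = sorbit n S a"
proof -
  let ?p = "orbit_size n S a"
  obtain k where b: "b = (\<sigma> ^^ k) a"
    using assms(2) by (auto simp: sorbit_def)
  have "(\<sigma> ^^ m) a = (\<sigma> ^^ (m + (?p - 1) * k)) b" for m
  proof -
    have "(\<sigma> ^^ m) a = (\<sigma> ^^ (m + ?p * k)) a"
      using funpow_mod_eq[OF funpow_orbit_size[OF assms(1)]] by (metis mod_mult_self2)
    also have "m + ?p * k = m + (?p - 1) * k + k"
      using orbit_size_pos[OF assms(1)] by (cases ?p) auto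
    finally show ?thesis
      by (simp add: b funpow_add)
  qed
  then show ?thesis
    unfolding sorbit_def b by (auto simp flip: funpow_add comp_apply[of "\<sigma> ^^ _"])
qed

lemma ex1_orbit_index:
  assumes "a \<in> {1..n}" "\<exists>!x\<in>sorbit n S a. P x"
  shows "\<exists>!t. t \<le> orbit_size n S a - 1 \<and> P ((\<sigma> ^^ t) a)"
proof -
  let ?p = "orbit_size n S a"
  obtain x where x: "x \<in> sorbit n S a" "P x"
    and uniq: "\<And>y. y \<in> sorbit n S a \<Longrightarrow> P y \<Longrightarrow> y = x"
    using assms(2) by blast
  obtain t where t: "t < ?p" "x = (\<sigma> ^^ t) a"
    using x(1) sorbit_eq_image[OF assms(1)] by auto
  show ?thesis
  proof (rule ex1I[of _ t])
    show "t \<le> ?p - 1 \<and> P ((\<sigma> ^^ t) a)"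
      using t x(2) by auto
  next
    fix t' assume t': "t' \<le> ?p - 1 \<and> P ((\<sigma> ^^ t') a)"
    then have "t' < ?p"
      using orbit_size_pos[OF assms(1)] by linarith
    moreover from this have "(\<sigma> ^^ t') a = (\<sigma> ^^ t) a"
      using uniq[of "(\<sigma> ^^ t') a"] t' t(2) sorbit_eq_image[OF assms(1)] by auto
    ultimately show "t' = t"
      using inj_on_orbit_index[OF assms(1)] t(1) by (auto dest: inj_onD)
  qed
qed

definition offset :: "nat \<Rightarrow> nat \<Rightarrow> int" where
  "offset A c = (int A - int c) mod int n"

definition gap :: "nat \<Rightarrow> int" where
  "gap A = int d * int n + 1 - int (len A)"

text \<open>For long A, \<sigma> A lies at offset gap A (mod n) from A, so the window of A
  consists of the vertices strictly between \<sigma> A and A.\<close>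
definition window :: "nat \<Rightarrow> nat set" where
  "window A = {c \<in> {1..n}. 1 \<le> offset A c \<and> offset A c < gap A}"

lemma offset_bounds: "0 \<le> offset A c" "offset A c < int n"
  unfolding offset_def using n_pos by auto

lemma offset_dvd: "int n dvd int A - int c - offset A c"
  unfolding offset_def by (rule dvd_minus_mod)

lemma offset_eqI:
  assumes "int n dvd int A - int c - v" "0 \<le> v" "v < int n"
  shows "offset A c = v"
proof (rule bounded_eq_if_dvd_diff)
  have "int n dvd (int A - int c - v) - (int A - int c - offset A c)"
    using assms(1) offset_dvd by (rule dvd_diff)
  then show "int n dvd offset A c - v"
    by simp
qed (use assms offset_bounds in auto)

lemma offset_self: "offset A A = 0"
  by (simp add: offset_def)

lemma offset_inj:
  assumes "c \<in> {1..n}" "c' \<in> {1..n}" "offset A c = offset A c'"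
  shows "c = c'"
proof (rule label_eq_if_dvd_diff)
  have "int n dvd (int A - int c' - offset A c') - (int A - int c - offset A c)"
    using offset_dvd offset_dvd by (rule dvd_diff)
  then show "int n dvd int c - int c'"
    using assms(3) by simp
qed (use assms in auto)

lemma offset_sigma_dvd:
  assumes "b \<in> {1..n}"
  shows "int n dvd int A - int (\<sigma> b) - (offset A b + 1 - int (len b))"
proof -
  have "int n dvd (int A - int b - offset A b) + (int b + int (len b) - 1 - int (\<sigma> b))"
    using offset_dvd sigma_dvd[OF assms] by (rule dvd_add)
  then show ?thesis
    by (simp add: algebra_simps)
qed

lemma gap_bounds:
  assumes "A \<in> {1..n}"
  shows "1 \<le> gap A" and "n < len A \<Longrightarrow> gap A \<le> int n"
proof -
  have "len A \<le> d * n" "n < len A \<Longrightarrow> d * n < len A + n"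
    using len_bounds[OF assms] short_or_long[OF assms] by auto
  then show "1 \<le> gap A" "n < len A \<Longrightarrow> gap A \<le> int n"
    unfolding gap_def by (simp_all add: of_nat_mult[symmetric] del: of_nat_mult)
qed

text \<open>A stable map from the object at A to the one at b would have an image of length
  len b - offset A b.\<close>
lemma window_len_cases:
  assumes "A \<in> {1..n}" "b \<in> window A"
  shows "int (len b) \<le> offset A b \<or> offset A b + int (len A) < int (len b)"
proof (rule ccontr)
  assume "\<not> ?thesis"
  then have k: "1 \<le> int (len b) - offset A b" "int (len b) - offset A b \<le> int (len A)"
    by auto
  have b: "b \<in> {1..n}" "1 \<le> offset A b" "offset A b < gap A"
    using assms(2) by (auto simp: window_def)
  show False
  proof (rule no_stable_map_between_objects[OF assms(1) b(1) _ k])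
    show "A \<noteq> b"
      using b(2) offset_self by auto
    show "int (len b) - offset A b \<le> int (len b)"
      using offset_bounds(1) by simp
    show "int (len A) + int (len b) < int (len b) - offset A b + int d * int n + 1"
      using b(3) by (simp add: gap_def)
    show "int n dvd int A + (int (len b) - offset A b) - int b - int (len b)"
      using offset_dvd[of A b] by (simp add: algebra_simps)
  qed
qed

lemma offset_sigma_short:
  assumes "A \<in> {1..n}" "n < len A" "b \<in> window A" "len b \<le> n"
  shows "int (len b) \<le> offset A b"
    and "offset A (\<sigma> b) = offset A b + 1 - int (len b)"
proof -
  have b: "b \<in> {1..n}" "1 \<le> offset A b" "offset A b < gap A"
    using assms(3) by (auto simp: window_def)
  show len_b: "int (len b) \<le> offset A b"
    using window_len_cases[OF assms(1,3)] assms(2,4) offset_bounds(1)[of A b] by linarith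
  show "offset A (\<sigma> b) = offset A b + 1 - int (len b)"
    using offset_sigma_dvd[OF b(1)] len_b len_bounds[OF b(1)] offset_bounds(2)[of A b]
    by (intro offset_eqI) auto
qed

lemma offset_sigma_long:
  assumes "A \<in> {1..n}" "n < len A" "b \<in> window A" "n < len b"
  shows "offset A b + int (len A) < int (len b)"
    and "offset A (\<sigma> b) = offset A b + 1 - int (len b) + int d * int n"
proof -
  have b: "b \<in> {1..n}" "1 \<le> offset A b" "offset A b < gap A"
    using assms(3) by (auto simp: window_def)
  show len_b: "offset A b + int (len A) < int (len b)"
    using window_len_cases[OF assms(1,3)] assms(4) offset_bounds(2)[of A b] by linarith
  have "int n dvd (int A - int (\<sigma> b) - (offset A b + 1 - int (len b))) - int d * int n"
    using offset_sigma_dvd[OF b(1)] by (rule dvd_diff) simp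
  moreover have "int (len b) \<le> int d * int n"
    using len_bounds[OF b(1)] by (simp add: of_nat_mult[symmetric] del: of_nat_mult)
  moreover have "gap A \<le> int n"
    using gap_bounds(2)[OF assms(1,2)] .
  ultimately show "offset A (\<sigma> b) = offset A b + 1 - int (len b) + int d * int n"
    using len_b b(2) by (intro offset_eqI) (auto simp: gap_def algebra_simps)
qed

lemma sigma_in_window:
  assumes "A \<in> {1..n}" "n < len A" "b \<in> window A"
  shows "\<sigma> b \<in> window A"
proof -
  have b: "b \<in> {1..n}" "1 \<le> offset A b" "offset A b < gap A"
    using assms(3) by (auto simp: window_def)
  have "1 \<le> offset A (\<sigma> b) \<and> offset A (\<sigma> b) < gap A"
  proof (cases "len b \<le> n")
    case True
    then show ?thesis
      using offset_sigma_short[OF assms True] len_bounds[OF b(1)] b by linarith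
  next
    case False
    then have long: "n < len b"
      by simp
    show ?thesis
      using offset_sigma_long[OF assms long] len_bounds[OF b(1)] b
      by (simp add: gap_def of_nat_mult[symmetric] del: of_nat_mult)
  qed
  then show ?thesis
    using sigma_in_labels by (simp add: window_def)
qed

lemma sorbit_subset_window:
  assumes "A \<in> {1..n}" "n < len A" "s \<in> window A"
  shows "sorbit n S s \<subseteq> window A"
proof -
  have "(\<sigma> ^^ k) s \<in> window A" for k
    by (induction k) (simp_all add: assms(3) sigma_in_window[OF assms(1,2)])
  then show ?thesis
    unfolding sorbit_def by blast
qed

text \<open>A stable map from the object at c to the one at x would have an image of length
  offset A c - offset A x + len x.\<close>
lemma short_window_len_cases:
  assumes "A \<in> {1..n}" "n < len A" "x \<in> window A" "len x \<le> n"
    and "c \<in> {1..n}" "c \<noteq> x" "offset A (\<sigma> x) \<le> offset A c" "offset A c \<le> offset A x"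
  shows "int (len c) < offset A c - offset A x + int (len x)
    \<or> offset A c - offset A x + int d * int n < int (len c)"
proof (rule ccontr)
  assume "\<not> ?thesis"
  then have len_c: "offset A c - offset A x + int (len x) \<le> int (len c)"
    "int (len c) \<le> offset A c - offset A x + int d * int n"
    by auto
  have x: "x \<in> {1..n}" "offset A (\<sigma> x) = offset A x + 1 - int (len x)"
    using assms(3) offset_sigma_short(2)[OF assms(1-4)] by (auto simp: window_def)
  define k where "k = offset A c - offset A x + int (len x)"
  have "int n dvd (int A - int x - offset A x) - (int A - int c - offset A c)"
    using offset_dvd offset_dvd by (rule dvd_diff)
  then have dvd: "int n dvd int c + k - int x - int (len x)"
    by (simp add: k_def algebra_simps)
  show False
  proof (rule no_stable_map_between_objects[OF assms(5) x(1) assms(6) _ _ _ _ dvd])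
    show "1 \<le> k" "k \<le> int (len c)" "k \<le> int (len x)"
      "int (len c) + int (len x) < k + int d * int n + 1"
      using len_c x(2) assms(7,8) unfolding k_def by linarith+
  qed
qed

lemma offset_sigma_between:
  assumes "A \<in> {1..n}" "n < len A" "x \<in> window A" "len x \<le> n"
    and "c \<in> {1..n}" "c \<noteq> x" "offset A (\<sigma> x) \<le> offset A c" "offset A c \<le> offset A x"
  shows "offset A (\<sigma> x) \<le> offset A (\<sigma> c) \<and> offset A (\<sigma> c) \<le> offset A x"
proof -
  note x = offset_sigma_short[OF assms(1-4)]
  note len_cases = short_window_len_cases[OF assms]
  have len_x: "1 \<le> int (len x)" "int (len x) \<le> int n"
    using assms(3,4) len_bounds by (auto simp: window_def)
  have c_window: "c \<in> window A"
    using assms(3,5,7,8) x by (auto simp: window_def)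
  show ?thesis
  proof (cases "len c \<le> n")
    case True
    have "1 \<le> int (len c)" "int (len c) \<le> int n"
      using True len_bounds[OF assms(5)] by auto
    then show ?thesis
      using len_cases offset_sigma_short[OF assms(1,2) c_window True] x(2) len_x two_n_le_dn
        assms(7,8) by linarith
  next
    case False
    have "int n < int (len c)" "int (len c) \<le> int d * int n"
      using False len_bounds[OF assms(5)] by (auto simp: of_nat_mult[symmetric] simp del: of_nat_mult)
    then show ?thesis
      using len_cases offset_sigma_long(2)[OF assms(1,2) c_window] False x(2) len_x
        assms(7,8) by linarith
  qed
qed

lemma sorbit_offset_between:
  assumes "A \<in> {1..n}" "n < len A" "x \<in> window A" "len x \<le> n" "y \<in> sorbit n S x"
  shows "offset A (\<sigma> x) \<le> offset A y \<and> offset A y \<le> offset A x"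
proof -
  have x_in: "x \<in> {1..n}"
    using assms(3) by (simp add: window_def)
  have sigma_x: "offset A (\<sigma> x) \<le> offset A x"
    using offset_sigma_short[OF assms(1-4)] len_bounds[OF x_in] by simp
  have "offset A (\<sigma> x) \<le> offset A ((\<sigma> ^^ k) x) \<and> offset A ((\<sigma> ^^ k) x) \<le> offset A x" for k
  proof (induction k)
    case 0
    then show ?case
      using sigma_x by simp
  next
    case (Suc k)
    show ?case
    proof (cases "(\<sigma> ^^ k) x = x")
      case True
      then show ?thesis
        using sigma_x by simp
    next
      case False
      then show ?thesis
        using offset_sigma_between[OF assms(1-4) funpow_sigma_in_labels[OF x_in] False] Suc.IH
        by simp
    qed
  qed
  then show ?thesis
    using assms(5) unfolding sorbit_def by blast
qed

lemma windows_cover_complement: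
  assumes "B \<subseteq> {1..n}" "\<sigma> ` B \<subseteq> B" "\<forall>A\<in>B. n < len A" "B \<noteq> {}"
    and "c \<in> {1..n}" "c \<notin> B"
  shows "\<exists>A\<in>B. c \<in> window A"
proof -
  obtain A\<^sub>0 where "A\<^sub>0 \<in> B"
    using assms(4) by blast
  \<comment> \<open>the element of B closest to c from above; \<sigma> A lies gap A further down\<close>
  then obtain A where A: "A \<in> B"
    and least: "\<And>A'. A' \<in> B \<Longrightarrow> nat (offset A c) \<le> nat (offset A' c)"
    using ex_has_least_nat[of "\<lambda>A. A \<in> B" A\<^sub>0 "\<lambda>A. nat (offset A c)"] by blast
  have A_in: "A \<in> {1..n}"
    using A assms(1) by blast
  have "offset A c \<noteq> 0"
    using offset_inj[OF A_in assms(5), of A] offset_self[of A] A assms(6) by auto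
  then have pos: "1 \<le> offset A c"
    using offset_bounds(1)[of A c] by linarith
  have "offset A c < gap A"
  proof (rule ccontr)
    assume "\<not> offset A c < gap A"
    moreover have "int n dvd (int A - int c - offset A c)
        - (int A + int (len A) - 1 - int (\<sigma> A)) + int d * int n"
      by (rule dvd_add[OF dvd_diff[OF offset_dvd sigma_dvd[OF A_in]]]) simp
    ultimately have "offset (\<sigma> A) c = offset A c - gap A"
      using offset_bounds(2)[of A c] gap_bounds(1)[OF A_in]
      by (intro offset_eqI) (auto simp: gap_def algebra_simps)
    moreover have "\<sigma> A \<in> B"
      using A assms(2) by blast
    ultimately show False
      using least[of "\<sigma> A"] gap_bounds(1)[OF A_in] pos by simp
  qed
  then show ?thesis
    using A pos assms(5) by (auto simp: window_def)
qed

lemma ex1_short_in_sorbit: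
  assumes "A \<in> {1..n}" "n < len A" "s \<in> window A"
  shows "\<exists>!x\<in>sorbit n S s. len x \<le> n"
proof -
  let ?O = "sorbit n S s"
  have s: "s \<in> {1..n}"
    using assms(3) by (simp add: window_def)
  have O_window: "?O \<subseteq> window A"
    by (rule sorbit_subset_window[OF assms])
  have fin: "finite (offset A ` ?O)"
    using finite_subset[OF sorbit_subset_labels[OF s]] by blast
  have "Max (offset A ` ?O) \<in> offset A ` ?O"
    using fin self_in_sorbit by (intro Max_in) auto
  then obtain x where x: "x \<in> ?O" and x_max: "offset A x = Max (offset A ` ?O)"
    by (metis imageE)
  have max: "offset A y \<le> offset A x" if "y \<in> ?O" for y
    unfolding x_max using fin that by (intro Max_ge) auto
  have short: "len x \<le> n"
  proof (rule ccontr)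
    assume "\<not> len x \<le> n"
    then have "offset A (\<sigma> x) = offset A x + 1 - int (len x) + int d * int n"
      using offset_sigma_long(2)[OF assms(1,2)] O_window x by auto
    moreover have "len x \<le> d * n"
      using len_bounds sorbit_subset_labels[OF s] x by blast
    ultimately have "offset A x < offset A (\<sigma> x)"
      by (simp add: of_nat_mult[symmetric] del: of_nat_mult)
    then show False
      using max[OF sigma_in_sorbit[OF x]] by simp
  qed
  have "y = x" if "y \<in> ?O" "len y \<le> n" for y
  proof -
    have "x \<in> sorbit n S y"
      using sorbit_eq_if_mem[OF s that(1)] x by simp
    then have "offset A x \<le> offset A y"
      using sorbit_offset_between[OF assms(1,2)] O_window that by blast
    then show "y = x"
      using offset_inj max[OF that(1)] O_window that(1) x by (auto simp: window_def)
  qed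
  then show ?thesis
    using x short by blast
qed

lemma long_if_lval_eq:
  assumes "i \<in> {1..n}" "\<forall>j. j \<le> orbit_size n S i - 1 \<longrightarrow> lval n S i j = d - 1"
  shows "\<forall>A\<in>sorbit n S i. n < len A"
proof
  fix A assume "A \<in> sorbit n S i"
  then obtain t where "t < orbit_size n S i" "A = (\<sigma> ^^ t) i"
    using sorbit_eq_image[OF assms(1)] by auto
  then show "n < len A"
    using assms(2) d_ge_2 lval_eq_0_iff[OF assms(1), of t] by fastforce
qed

lemma ex1_short_in_sorbit_outside:
  assumes "i \<in> {1..n}" "\<forall>A\<in>sorbit n S i. n < len A" "s \<in> {1..n}" "s \<notin> sorbit n S i"
  shows "\<exists>!x\<in>sorbit n S s. len x \<le> n"
proof -
  have "\<sigma> ` sorbit n S i \<subseteq> sorbit n S i"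
    using sigma_in_sorbit by blast
  then obtain A where "A \<in> sorbit n S i" "s \<in> window A"
    using windows_cover_complement[OF sorbit_subset_labels[OF assms(1)] _ assms(2) _ assms(3,4)]
      self_in_sorbit by blast
  then show ?thesis
    using ex1_short_in_sorbit assms(2) sorbit_subset_labels[OF assms(1)] by blast
qed

end

theorem lemma4p7:
  fixes n d i :: nat and S :: "nmod set"
  assumes "1 \<le> n" and "2 \<le> d"
    and "is_sms n d S"
    and "i \<in> {1..n}"
    and "\<forall>j. j \<le> orbit_size n S i - 1 \<longrightarrow> lval n S i j = d - 1"
  shows "\<forall>s\<in>{1..n}. sorbit n S s \<noteq> sorbit n S i \<longrightarrow>
           (\<exists>!t. t \<le> orbit_size n S s - 1 \<and> lval n S s t = 0)"
proof -
  interpret simple_minded_system n d S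
    using assms(1-3) by unfold_locales simp_all
  have long: "\<forall>A\<in>sorbit n S i. n < len A"
    by (rule long_if_lval_eq[OF assms(4,5)])
  show ?thesis
  proof (intro ballI impI)
    fix s assume s: "s \<in> {1..n}" and "sorbit n S s \<noteq> sorbit n S i"
    then have "s \<notin> sorbit n S i"
      using sorbit_eq_if_mem[OF assms(4)] by blast
    then have "\<exists>!x\<in>sorbit n S s. len x \<le> n"
      by (rule ex1_short_in_sorbit_outside[OF assms(4) long s])
    then show "\<exists>!t. t \<le> orbit_size n S s - 1 \<and> lval n S s t = 0"
      using ex1_orbit_index[OF s] lval_eq_0_iff[OF s] by simp
  qed
qed

end
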